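(* Let $\mathcal{A}$ be a topological ring, let $\mathcal{B}$ be a topological $\mathcal{A}$-algebra and let $c\colon\mathcal{B}\to\widehat{\mathcal{B}}$ be the separated completion of $\mathcal{B}$. Then for every continuous iterated higher $\mathcal{A}$-derivation $D=\{D^{(i)}\}_{i\ge0}$ of $\mathcal{B}$ there exists a unique continuous iterated higher $\mathcal{A}$-derivation $\widehat{D}=\{\widehat{D}^{(i)}\}_{i\ge0}$ of $\widehat{\mathcal{B}}$ such that $\widehat{D}^{(i)}\circ c=c\circ D^{(i)}$ for every $i\ge0$. Furthermore, if $D$ is topologically integrable, then so is $\widehat{D}$.
   Context: Conventions: topological rings are linearly topologized with a countable fundamental system of open ideals; homomorphisms are continuous; a topological $\mathcal{A}$-algebra is a topological ring with a continuous homomorphism from $\mathcal{A}$. The separated completion is $\widehat{\mathcal{B}}=\varprojlim_{\mathfrak{b}}\mathcal{B}/\mathfrak{b}$ over open ideals (quotients discrete) with inverse limit topology, and $c$ the canonical map. A continuous iterated higher $\mathcal{A}$-derivation of $\mathcal{B}$ is a family $\{D^{(i)}\}_{i\ge0}$ of continuous $\mathcal{A}$-module homomorphisms $\mathcal{B}\to\mathcal{B}$ with $D^{(0)}=\mathrm{id}$, $D^{(i)}(bb')=\sum_{j=0}^iD^{(j)}(b)D^{(i-j)}(b')$, and $D^{(i)}\circ D^{(j)}=\binom{i+j}{i}D^{(i+j)}$. It is topologically integrable if $(D^{(i)})_i$ converges continuously to $0$: for every $b$ and every open ideal $\mathfrak{b}'$ there exist an open ideal $\mathfrak{b}$ and $n_0$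 with $D^{(n)}(b+\mathfrak{b})\subseteq\mathfrak{b}'$ for all $n\ge n_0$. *)

theory Defs
  imports "HOL-Algebra.QuotRing" "HOL-Library.Countable_Set"
begin

text \<open>A linearly topologized (commutative) ring: the topology is given by a countable,
  nonempty, downward directed family F of ideals, a fundamental system of open ideals.\<close>
definition top_ring :: "('a, 'm) ring_scheme \<Rightarrow> 'a set set \<Rightarrow> bool" where
  "top_ring R F \<longleftrightarrow> cring R \<and> F \<noteq> {} \<and> countable F \<and> (\<forall>I\<in>F. ideal I R) \<and>
     (\<forall>I\<in>F. \<forall>J\<in>F. \<exists>K\<in>F. K \<subseteq> I \<inter> J)"

definition open_ideal :: "('a, 'm) ring_scheme \<Rightarrow> 'a set set \<Rightarrow> 'a set \<Rightarrow> bool" where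
  "open_ideal R F I \<longleftrightarrow> ideal I R \<and> (\<exists>J\<in>F. J \<subseteq> I)"

definition top_continuous ::
  "('a, 'm) ring_scheme \<Rightarrow> 'a set set \<Rightarrow> ('b, 'n) ring_scheme \<Rightarrow> 'b set set \<Rightarrow> ('a \<Rightarrow> 'b) \<Rightarrow> bool" where
  "top_continuous R F S G f \<longleftrightarrow>
     (\<forall>x\<in>carrier R. \<forall>I. open_ideal S G I \<longrightarrow>
        (\<exists>J. open_ideal R F J \<and> (\<forall>y\<in>carrier R. y \<ominus>\<^bsub>R\<^esub> x \<in> J \<longrightarrow> f y \<ominus>\<^bsub>S\<^esub> f x \<in> I)))"

definition top_algebra ::
  "('a, 'm) ring_scheme \<Rightarrow> 'a set set \<Rightarrow> ('b, 'n) ring_scheme \<Rightarrow> 'b set set \<Rightarrow> ('a \<Rightarrow> 'b) \<Rightarrow> bool" where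
  "top_algebra A FA B FB phi \<longleftrightarrow> top_ring A FA \<and> top_ring B FB \<and> phi \<in> ring_hom A B \<and>
     top_continuous A FA B FB phi"

definition cont_iter_higher_deriv ::
  "('a, 'm) ring_scheme \<Rightarrow> ('b, 'n) ring_scheme \<Rightarrow> 'b set set \<Rightarrow> ('a \<Rightarrow> 'b) \<Rightarrow> (nat \<Rightarrow> 'b \<Rightarrow> 'b) \<Rightarrow> bool" where
  "cont_iter_higher_deriv A B FB phi D \<longleftrightarrow>
     (\<forall>i. D i \<in> carrier B \<rightarrow> carrier B) \<and>
     (\<forall>i. top_continuous B FB B FB (D i)) \<and>
     (\<forall>i. \<forall>x\<in>carrier B. \<forall>y\<in>carrier B. D i (x \<oplus>\<^bsub>B\<^esub> y) = D i x \<oplus>\<^bsub>B\<^esub> D i y) \<and>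
     (\<forall>i. \<forall>a\<in>carrier A. \<forall>x\<in>carrier B. D i (phi a \<otimes>\<^bsub>B\<^esub> x) = phi a \<otimes>\<^bsub>B\<^esub> D i x) \<and>
     (\<forall>x\<in>carrier B. D 0 x = x) \<and>
     (\<forall>i. \<forall>x\<in>carrier B. \<forall>y\<in>carrier B.
        D i (x \<otimes>\<^bsub>B\<^esub> y) = (\<Oplus>\<^bsub>B\<^esub>j\<in>{..i}. D j x \<otimes>\<^bsub>B\<^esub> D (i - j) y)) \<and>
     (\<forall>i j. \<forall>x\<in>carrier B. D i (D j x) = add_pow B ((i + j) choose i) (D (i + j) x))"

text \<open>Topological integrability: (D n)_n converges continuously to 0.\<close>
definition top_integrable :: "('b, 'n) ring_scheme \<Rightarrow> 'b set set \<Rightarrow> (nat \<Rightarrow> 'b \<Rightarrow> 'b) \<Rightarrow> bool" where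
  "top_integrable B FB D \<longleftrightarrow>
     (\<forall>x\<in>carrier B. \<forall>I'. open_ideal B FB I' \<longrightarrow>
        (\<exists>I n0. open_ideal B FB I \<and>
           (\<forall>n\<ge>n0. \<forall>y\<in>carrier B. y \<ominus>\<^bsub>B\<^esub> x \<in> I \<longrightarrow> D n y \<in> I')))"

text \<open>Separated completion: compatible families of cosets indexed by open ideals
  (value {} at non-open sets), with componentwise quotient-ring operations.\<close>
definition completion :: "('b, 'n) ring_scheme \<Rightarrow> 'b set set \<Rightarrow> ('b set \<Rightarrow> 'b set) ring" where
  "completion B F =
    \<lparr> carrier = {x. (\<forall>I. open_ideal B F I \<longrightarrow> x I \<in> carrier (B Quot I)) \<and>
                   (\<forall>I J. open_ideal B F I \<longrightarrow> open_ideal B F J \<longrightarrow> I \<subseteq> J \<longrightarrow> x I \<subseteq> x J) \<and>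
                   (\<forall>I. \<not> open_ideal B F I \<longrightarrow> x I = {})},
      mult = (\<lambda>x y I. if open_ideal B F I then x I \<otimes>\<^bsub>B Quot I\<^esub> y I else {}),
      one = (\<lambda>I. if open_ideal B F I then \<one>\<^bsub>B Quot I\<^esub> else {}),
      zero = (\<lambda>I. if open_ideal B F I then \<zero>\<^bsub>B Quot I\<^esub> else {}),
      add = (\<lambda>x y I. if open_ideal B F I then x I \<oplus>\<^bsub>B Quot I\<^esub> y I else {}) \<rparr>"

text \<open>Fundamental system of open ideals of the completion (inverse limit topology):
  kernels of the projections to B/I, I in F.\<close>
definition completion_fs :: "('b, 'n) ring_scheme \<Rightarrow> 'b set set \<Rightarrow> ('b set \<Rightarrow> 'b set) set set" where
  "completion_fs B F = (\<lambda>I. {x \<in> carrier (completion B F). x I = I}) ` F"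

definition compl_map :: "('b, 'n) ring_scheme \<Rightarrow> 'b set set \<Rightarrow> 'b \<Rightarrow> ('b set \<Rightarrow> 'b set)" where
  "compl_map B F b = (\<lambda>I. if open_ideal B F I then I +>\<^bsub>B\<^esub> b else {})"

end

theory Submission
  imports Defs "HOL-Algebra.Multiplicative_Group"
begin

(* A continuous additive map d of B is uniformly continuous: for every open ideal I there is an
   open ideal J with d(J) contained in I, so d induces maps B/J -> B/I, and these assemble to a
   map of the inverse limit: the I-component of the extension is d(b) + I for any b representing
   the J-component. Each identity in the definition of a continuous iterated higher derivation
   involves only finitely many D^(i), so modulo a given I it can be checked at one common J, where
   it is the corresponding identity in B. Uniqueness holds because c(B) is dense in the separated
   completion, and continuous maps agreeing on a dense subset of a separated ring agree
   everywhere. For integrability, integrability of D at 0 gives a single J with D^(n)(J)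
   contained in I for all large n. If b represents the J-component of x, every y near x has the
   same J-component, so the I-component of the extension of D^(n) at y is D^(n)(b) + I; and
   D^(n)(b) lies in I for large n by integrability at b. *)

lemma (in abelian_group_hom) hom_a_minus:
  "x \<in> carrier G \<Longrightarrow> y \<in> carrier G \<Longrightarrow> h (x \<ominus>\<^bsub>G\<^esub> y) = h x \<ominus>\<^bsub>H\<^esub> h y"
  by (simp add: a_minus_def)

lemma (in ring_hom_ring) hom_add_pow:
  "x \<in> carrier R \<Longrightarrow> h (add_pow R (n::nat) x) = add_pow S n (h x)"
  using group_hom.hom_nat_pow[OF a_group_hom] by (simp add: add_pow_def)

section \<open>Linearly topologized rings\<close>

definition separated :: "('a, 'm) ring_scheme \<Rightarrow> 'a set set \<Rightarrow> bool" where
  "separated R G \<longleftrightarrow>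
     (\<forall>x\<in>carrier R. \<forall>y\<in>carrier R. (\<forall>I\<in>G. x \<ominus>\<^bsub>R\<^esub> y \<in> I) \<longrightarrow> x = y)"

definition dense_in :: "('a, 'm) ring_scheme \<Rightarrow> 'a set set \<Rightarrow> 'a set \<Rightarrow> bool" where
  "dense_in R G S \<longleftrightarrow> S \<subseteq> carrier R \<and> (\<forall>x\<in>carrier R. \<forall>I\<in>G. \<exists>s\<in>S. s \<ominus>\<^bsub>R\<^esub> x \<in> I)"

definition cont_additive :: "('a, 'm) ring_scheme \<Rightarrow> 'a set set \<Rightarrow> ('a \<Rightarrow> 'a) \<Rightarrow> bool" where
  "cont_additive R G d \<longleftrightarrow> d \<in> hom (add_monoid R) (add_monoid R) \<and> top_continuous R G R G d"

lemma separatedD: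
  "separated R G \<Longrightarrow> x \<in> carrier R \<Longrightarrow> y \<in> carrier R \<Longrightarrow> (\<And>I. I \<in> G \<Longrightarrow> x \<ominus>\<^bsub>R\<^esub> y \<in> I)
    \<Longrightarrow> x = y"
  unfolding separated_def by blast

locale lin_top_ring =
  fixes R :: "('a, 'm) ring_scheme" (structure) and G :: "'a set set"
  assumes top_ring: "top_ring R G"
begin

sublocale cring R
  using top_ring unfolding top_ring_def by simp

abbreviation opn :: "'a set \<Rightarrow> bool" where
  "opn I \<equiv> open_ideal R G I"

lemma open_ideal_ideal: "opn I \<Longrightarrow> ideal I R"
  unfolding open_ideal_def by simp

lemma open_ideal_subset: "opn I \<Longrightarrow> I \<subseteq> carrier R"
  using ideal.Icarr[OF open_ideal_ideal] by blast

lemma open_ideal_minus_closed: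
  assumes "opn I" "x \<in> I" "y \<in> I" shows "x \<ominus> y \<in> I"
proof -
  interpret ideal I R using assms(1) by (rule open_ideal_ideal)
  show ?thesis using assms(2,3) by (simp add: a_minus_def)
qed

lemma fundamental_open: "I \<in> G \<Longrightarrow> opn I"
  using top_ring unfolding top_ring_def open_ideal_def by blast

lemma open_ideal_fundamental:
  assumes "opn I" obtains J where "J \<in> G" "J \<subseteq> I"
  using assms unfolding open_ideal_def by blast

lemma fundamental_directed:
  assumes "I \<in> G" "J \<in> G" obtains K where "K \<in> G" "K \<subseteq> I \<inter> J"
  using assms top_ring unfolding top_ring_def by blast

lemma open_ideal_Int:
  assumes "opn I" "opn J" shows "opn (I \<inter> J)"
proof -
  obtain I0 where I0: "I0 \<in> G" "I0 \<subseteq> I" using assms(1) by (rule open_ideal_fundamental)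
  obtain J0 where J0: "J0 \<in> G" "J0 \<subseteq> J" using assms(2) by (rule open_ideal_fundamental)
  obtain K where K: "K \<in> G" "K \<subseteq> I0 \<inter> J0" using fundamental_directed[OF I0(1) J0(1)] .
  have "ideal (I \<inter> J) R"
    using i_intersect[OF open_ideal_ideal open_ideal_ideal] assms .
  moreover have "K \<subseteq> I \<inter> J" using K(2) I0(2) J0(2) by blast
  ultimately show ?thesis using K(1) unfolding open_ideal_def by blast
qed

lemma continuous_eq_on_dense:
  assumes "separated R G" and "dense_in R G S"
    and f: "f \<in> carrier R \<rightarrow> carrier R" "top_continuous R G R G f"
    and g: "g \<in> carrier R \<rightarrow> carrier R" "top_continuous R G R G g"
    and eq: "\<And>s. s \<in> S \<Longrightarrow> f s = g s" and x: "x \<in> carrier R"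
  shows "f x = g x"
proof -
  have "f x \<ominus> g x \<in> I" if I: "I \<in> G" for I
  proof -
    obtain Jf where Jf: "opn Jf" "\<And>y. y \<in> carrier R \<Longrightarrow> y \<ominus> x \<in> Jf \<Longrightarrow> f y \<ominus> f x \<in> I"
      using f(2) x fundamental_open[OF I] unfolding top_continuous_def by blast
    obtain Jg where Jg: "opn Jg" "\<And>y. y \<in> carrier R \<Longrightarrow> y \<ominus> x \<in> Jg \<Longrightarrow> g y \<ominus> g x \<in> I"
      using g(2) x fundamental_open[OF I] unfolding top_continuous_def by blast
    obtain J where J: "J \<in> G" "J \<subseteq> Jf \<inter> Jg"
      using open_ideal_fundamental open_ideal_Int[OF Jf(1) Jg(1)] by blast
    obtain s where s: "s \<in> S" "s \<ominus> x \<in> J"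
      using \<open>dense_in R G S\<close> x J(1) unfolding dense_in_def by blast
    have sc: "s \<in> carrier R" using s(1) \<open>dense_in R G S\<close> unfolding dense_in_def by blast
    have "f x \<in> carrier R" "g x \<in> carrier R" "g s \<in> carrier R"
      using f(1) g(1) x sc by auto
    then have "f x \<ominus> g x = (g s \<ominus> g x) \<ominus> (f s \<ominus> f x)"
      unfolding eq[OF s(1)] by algebra
    also have "\<dots> \<in> I"
      using Jf(2) Jg(2) sc s(2) J(2) open_ideal_minus_closed[OF fundamental_open[OF I]] by blast
    finally show ?thesis .
  qed
  moreover have "f x \<in> carrier R" "g x \<in> carrier R"
    using f(1) g(1) x by auto
  ultimately show ?thesis
    using separatedD[OF \<open>separated R G\<close>] by simp
qed

lemma additive_abelian_group_hom:
  "d \<in> hom (add_monoid R) (add_monoid R) \<Longrightarrow> abelian_group_hom R R d"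
  by (intro abelian_group_homI group_hom.intro group_hom_axioms.intro
      abelian_group_axioms add.is_group) simp

lemma cont_additive_abelian_group_hom:
  "cont_additive R G d \<Longrightarrow> abelian_group_hom R R d"
  unfolding cont_additive_def by (simp add: additive_abelian_group_hom)

lemma cont_additive_closed: "cont_additive R G d \<Longrightarrow> a \<in> carrier R \<Longrightarrow> d a \<in> carrier R"
  using abelian_group_hom.hom_closed[OF cont_additive_abelian_group_hom] .

lemma cont_additive_modulus:
  assumes "cont_additive R G d" "opn I"
  obtains J where "opn J" "d ` J \<subseteq> I"
proof -
  interpret d: abelian_group_hom R R d
    using assms(1) by (rule cont_additive_abelian_group_hom)
  obtain J where J: "opn J" "\<And>y. y \<in> carrier R \<Longrightarrow> y \<ominus> \<zero> \<in> J \<Longrightarrow> d y \<ominus> d \<zero> \<in> I"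
    using assms unfolding cont_additive_def top_continuous_def by blast
  have "d ` J \<subseteq> I"
    using J(2) open_ideal_subset[OF J(1)] by (force simp: a_minus_def)
  with J(1) show ?thesis by (rule that)
qed

lemma cont_additiveI:
  assumes hom: "d \<in> hom (add_monoid R) (add_monoid R)"
    and modulus: "\<And>I. opn I \<Longrightarrow> \<exists>J. opn J \<and> d ` J \<subseteq> I"
  shows "cont_additive R G d"
proof -
  interpret d: abelian_group_hom R R d using hom by (rule additive_abelian_group_hom)
  have "top_continuous R G R G d"
    unfolding top_continuous_def
  proof (intro ballI allI impI)
    fix x I assume x: "x \<in> carrier R" and I: "opn I"
    obtain J where J: "opn J" "d ` J \<subseteq> I" using modulus[OF I] by blast
    have "d y \<ominus> d x \<in> I" if "y \<in> carrier R" "y \<ominus> x \<in> J" for y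
    proof -
      have "d y \<ominus> d x = d (y \<ominus> x)" using that(1) x by (simp add: d.hom_a_minus)
      then show ?thesis using J(2) that(2) by auto
    qed
    with J(1) show "\<exists>J. opn J \<and> (\<forall>y\<in>carrier R. y \<ominus> x \<in> J \<longrightarrow> d y \<ominus> d x \<in> I)"
      by blast
  qed
  with hom show ?thesis unfolding cont_additive_def by blast
qed

lemma cont_additive_common_modulus:
  fixes n :: nat
  assumes "\<And>k. cont_additive R G (D k)" "opn I"
  shows "\<exists>J. opn J \<and> (\<forall>k\<le>n. D k ` J \<subseteq> I)"
proof (induction n)
  case 0
  obtain J where "opn J" "D 0 ` J \<subseteq> I" using cont_additive_modulus[OF assms] .
  then show ?case by auto
next
  case (Suc n)
  then obtain J where J: "opn J" "\<forall>k\<le>n. D k ` J \<subseteq> I" by blast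
  obtain J' where J': "opn J'" "D (Suc n) ` J' \<subseteq> I"
    using cont_additive_modulus[OF assms] .
  have "\<forall>k\<le>Suc n. D k ` (J \<inter> J') \<subseteq> I"
    using J(2) J'(2) by (auto simp: le_Suc_eq)
  with open_ideal_Int[OF J(1) J'(1)] show ?case by blast
qed

section \<open>The separated completion\<close>

abbreviation Q :: "'a set \<Rightarrow> 'a set ring" where
  "Q I \<equiv> R Quot I"

abbreviation C :: "('a set \<Rightarrow> 'a set) ring" where
  "C \<equiv> completion R G"

lemma quotient_cring: "opn I \<Longrightarrow> cring (Q I)"
  using ideal.quotient_is_cring[OF open_ideal_ideal] is_cring by blast

lemma coset_ring_hom: "opn I \<Longrightarrow> ring_hom_cring R (Q I) ((+>) I)"
  using ideal.rcos_ring_hom_cring[OF open_ideal_ideal] is_cring by blast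

lemma coset_eq_iff:
  "opn I \<Longrightarrow> a \<in> carrier R \<Longrightarrow> b \<in> carrier R \<Longrightarrow> I +> a = I +> b \<longleftrightarrow> a \<ominus> b \<in> I"
  using quotient_eq_iff_same_a_r_cos[OF open_ideal_ideal] by blast

lemma coset_mem_iff:
  assumes "opn I" "a \<in> carrier R" "b \<in> carrier R"
  shows "a \<in> I +> b \<longleftrightarrow> I +> a = I +> b"
proof -
  interpret abelian_subgroup I R
    using abelian_subgroupI3[OF ideal.axioms(1)[OF open_ideal_ideal[OF assms(1)]] is_abelian_group] .
  show ?thesis
    using a_rcos_module_minus[OF ring_axioms assms(3,2)] coset_eq_iff[OF assms] by simp
qed

lemma quotient_zero: "\<zero>\<^bsub>Q I\<^esub> = I"
  by (simp add: FactRing_def)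

lemma coset_of_mem: "opn I \<Longrightarrow> a \<in> I \<Longrightarrow> I +> a = I"
  using a_rcos_zero[OF open_ideal_ideal] .

lemma coset_zero: "opn I \<Longrightarrow> I +> \<zero> = I"
  using coset_of_mem additive_subgroup.zero_closed[OF ideal.axioms(1)[OF open_ideal_ideal]] by blast

lemma coset_mono: "I \<subseteq> J \<Longrightarrow> I +> a \<subseteq> J +> a"
  unfolding a_r_coset_def r_coset_def by auto

lemma quotient_carrierE:
  assumes "X \<in> carrier (Q I)" obtains a where "a \<in> carrier R" "X = I +> a"
  using assms unfolding FactRing_def A_RCOSETS_def RCOSETS_def a_r_coset_def by auto

lemma completion_component:
  "x \<in> carrier C \<Longrightarrow> opn I \<Longrightarrow> x I \<in> carrier (Q I)"
  by (simp add: completion_def)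

lemma completion_component_mono:
  "x \<in> carrier C \<Longrightarrow> opn I \<Longrightarrow> opn J \<Longrightarrow> I \<subseteq> J \<Longrightarrow> x I \<subseteq> x J"
  by (simp add: completion_def)

lemma completion_component_not_open:
  "x \<in> carrier C \<Longrightarrow> \<not> opn I \<Longrightarrow> x I = {}"
  by (simp add: completion_def)

lemma completion_eqI:
  assumes "x \<in> carrier C" "y \<in> carrier C" "\<And>I. opn I \<Longrightarrow> x I = y I"
  shows "x = y"
proof
  fix I show "x I = y I"
    using assms completion_component_not_open[OF assms(1)] completion_component_not_open[OF assms(2)]
    by (cases "opn I") simp_all
qed

lemma completion_componentE:
  assumes "x \<in> carrier C" "opn I" obtains a where "a \<in> carrier R" "x I = I +> a"
  using completion_component[OF assms] by (rule quotient_carrierE)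

lemma completion_component_coarsen:
  assumes x: "x \<in> carrier C" and I: "opn I" and J: "opn J" and IJ: "I \<subseteq> J"
    and a: "a \<in> carrier R" "x I = I +> a"
  shows "x J = J +> a"
proof -
  obtain b where b: "b \<in> carrier R" "x J = J +> b" using x J by (rule completion_componentE)
  have "a \<in> I +> a" using coset_mem_iff[OF I a(1) a(1)] by simp
  then have "a \<in> J +> b" using completion_component_mono[OF x I J IJ] a(2) b(2) by blast
  then show ?thesis using coset_mem_iff[OF J a(1) b(1)] b(2) by simp
qed

lemma completion_memI:
  assumes "\<And>I. \<not> opn I \<Longrightarrow> z I = {}"
    and "\<And>J. opn J \<Longrightarrow> \<exists>a\<in>carrier R. \<forall>I. opn I \<longrightarrow> J \<subseteq> I \<longrightarrow> z I = I +> a"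
  shows "z \<in> carrier C"
proof -
  have "z I \<in> carrier (Q I)" if I: "opn I" for I
  proof -
    obtain a where "a \<in> carrier R" "z I = I +> a" using assms(2)[OF I] I by blast
    then show ?thesis
      using ring_hom_closed[OF ring_hom_cring.homh[OF coset_ring_hom[OF I]]] by simp
  qed
  moreover have "z I \<subseteq> z J" if I: "opn I" and J: "opn J" and IJ: "I \<subseteq> J" for I J
  proof -
    obtain a where "z I = I +> a" "z J = J +> a" using assms(2)[OF I] I J IJ by blast
    then show ?thesis using coset_mono[OF IJ] by simp
  qed
  ultimately show ?thesis using assms(1) by (simp add: completion_def)
qed

lemma completion_apply:
  "(x \<oplus>\<^bsub>C\<^esub> y) I = (if opn I then x I \<oplus>\<^bsub>Q I\<^esub> y I else {})"
  "(x \<otimes>\<^bsub>C\<^esub> y) I = (if opn I then x I \<otimes>\<^bsub>Q I\<^esub> y I else {})"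
  "\<zero>\<^bsub>C\<^esub> I = (if opn I then \<zero>\<^bsub>Q I\<^esub> else {})"
  "\<one>\<^bsub>C\<^esub> I = (if opn I then \<one>\<^bsub>Q I\<^esub> else {})"
  by (simp_all add: completion_def)

lemma completion_component_add_mult:
  assumes J: "opn J" and a: "a \<in> carrier R" "x J = J +> a" and b: "b \<in> carrier R" "y J = J +> b"
  shows "(x \<oplus>\<^bsub>C\<^esub> y) J = J +> (a \<oplus> b)" "(x \<otimes>\<^bsub>C\<^esub> y) J = J +> (a \<otimes> b)"
proof -
  interpret h: ring_hom_cring R "Q J" "(+>) J" using coset_ring_hom[OF J] .
  show "(x \<oplus>\<^bsub>C\<^esub> y) J = J +> (a \<oplus> b)" "(x \<otimes>\<^bsub>C\<^esub> y) J = J +> (a \<otimes> b)"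
    using J a b by (simp_all add: completion_apply)
qed

lemma completion_closed:
  assumes x: "x \<in> carrier C" and y: "y \<in> carrier C"
  shows "x \<oplus>\<^bsub>C\<^esub> y \<in> carrier C" "x \<otimes>\<^bsub>C\<^esub> y \<in> carrier C"
    and "(\<lambda>I. if opn I then \<ominus>\<^bsub>Q I\<^esub> x I else {}) \<in> carrier C"
proof -
  {
    fix J assume J: "opn J"
    obtain a where a: "a \<in> carrier R" "x J = J +> a" using x J by (rule completion_componentE)
    obtain b where b: "b \<in> carrier R" "y J = J +> b" using y J by (rule completion_componentE)
    have "(x \<oplus>\<^bsub>C\<^esub> y) I = I +> (a \<oplus> b)" "(x \<otimes>\<^bsub>C\<^esub> y) I = I +> (a \<otimes> b)"
      "\<ominus>\<^bsub>Q I\<^esub> x I = I +> (\<ominus> a)" if I: "opn I" and JI: "J \<subseteq> I" for I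
    proof -
      have xI: "x I = I +> a" and yI: "y I = I +> b"
        using completion_component_coarsen[OF x J I JI a] completion_component_coarsen[OF y J I JI b] .
      then show "(x \<oplus>\<^bsub>C\<^esub> y) I = I +> (a \<oplus> b)" "(x \<otimes>\<^bsub>C\<^esub> y) I = I +> (a \<otimes> b)"
        using completion_component_add_mult[where x = x and y = y, OF I a(1) xI b(1) yI] by simp_all
      show "\<ominus>\<^bsub>Q I\<^esub> x I = I +> (\<ominus> a)"
        using ring_hom_cring.hom_a_inv[OF coset_ring_hom[OF I] a(1)] xI by simp
    qed
    then have "\<exists>c\<in>carrier R. \<forall>I. opn I \<longrightarrow> J \<subseteq> I \<longrightarrow> (x \<oplus>\<^bsub>C\<^esub> y) I = I +> c"
      "\<exists>c\<in>carrier R. \<forall>I. opn I \<longrightarrow> J \<subseteq> I \<longrightarrow> (x \<otimes>\<^bsub>C\<^esub> y) I = I +> c"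
      "\<exists>c\<in>carrier R. \<forall>I. opn I \<longrightarrow> J \<subseteq> I \<longrightarrow>
         (\<lambda>I. if opn I then \<ominus>\<^bsub>Q I\<^esub> x I else {}) I = I +> c"
      using a(1) b(1) by auto
  }
  then show "x \<oplus>\<^bsub>C\<^esub> y \<in> carrier C" "x \<otimes>\<^bsub>C\<^esub> y \<in> carrier C"
    "(\<lambda>I. if opn I then \<ominus>\<^bsub>Q I\<^esub> x I else {}) \<in> carrier C"
    by (auto intro!: completion_memI simp: completion_apply)
qed

lemma compl_map_apply: "opn I \<Longrightarrow> compl_map R G b I = I +> b"
  by (simp add: compl_map_def)

lemma compl_map_closed: "b \<in> carrier R \<Longrightarrow> compl_map R G b \<in> carrier C"
  unfolding compl_map_def by (auto intro!: completion_memI)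

lemma completion_eq_componentwise:
  assumes "\<And>I. opn I \<Longrightarrow> cring (Q I) \<Longrightarrow> f I = g I" "\<And>I. \<not> opn I \<Longrightarrow> f I = g I"
  shows "f = g"
  using assms quotient_cring by (metis ext)

lemma completion_cring: "cring C"
proof -
  have "\<zero>\<^bsub>C\<^esub> = compl_map R G \<zero>" "\<one>\<^bsub>C\<^esub> = compl_map R G \<one>"
    using ring_hom_cring.hom_zero[OF coset_ring_hom, symmetric]
      ring_hom_one[OF ring_hom_cring.homh[OF coset_ring_hom], symmetric]
    by (intro completion_eq_componentwise; simp add: completion_apply compl_map_def)+
  then have zero: "\<zero>\<^bsub>C\<^esub> \<in> carrier C" and one: "\<one>\<^bsub>C\<^esub> \<in> carrier C"
    using compl_map_closed by simp_all
  note simps = completion_apply completion_component completion_component_not_open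
    cring.cring_simprules monoid.r_one[OF ring.is_monoid[OF cring.axioms(1)]]
  have neg: "\<exists>y\<in>carrier C. y \<oplus>\<^bsub>C\<^esub> x = \<zero>\<^bsub>C\<^esub>" if x: "x \<in> carrier C" for x
  proof
    show "(\<lambda>I. if opn I then \<ominus>\<^bsub>Q I\<^esub> x I else {}) \<oplus>\<^bsub>C\<^esub> x = \<zero>\<^bsub>C\<^esub>"
      using x by (intro completion_eq_componentwise) (simp_all add: simps)
  qed (rule completion_closed(3)[OF x x])
  show ?thesis
    by (intro cringI abelian_groupI comm_monoidI completion_closed zero one neg;
        (assumption | intro completion_eq_componentwise; simp add: simps completion_closed zero one))
qed

lemma completion_proj_ring_hom: "opn I \<Longrightarrow> ring_hom_cring C (Q I) (\<lambda>x. x I)"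
  by (intro ring_hom_cringI completion_cring quotient_cring ring_hom_memI)
    (simp_all add: completion_apply completion_component)

abbreviation proj_kernel :: "'a set \<Rightarrow> ('a set \<Rightarrow> 'a set) set" where
  "proj_kernel I \<equiv> {x \<in> carrier C. x I = I}"

lemma proj_kernel_ideal:
  assumes "opn I" shows "ideal (proj_kernel I) C"
proof -
  interpret p: ring_hom_cring C "Q I" "\<lambda>x. x I" using completion_proj_ring_hom[OF assms] .
  show ?thesis using p.ring.kernel_is_ideal unfolding a_kernel_def' quotient_zero .
qed

lemma completion_minus_mem_proj_kernel:
  assumes x: "x \<in> carrier C" and y: "y \<in> carrier C" and I: "opn I"
  shows "x \<ominus>\<^bsub>C\<^esub> y \<in> proj_kernel I \<longleftrightarrow> x I = y I"
proof -
  interpret p: ring_hom_cring C "Q I" "\<lambda>x. x I" using completion_proj_ring_hom[OF I] .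
  have "(x \<ominus>\<^bsub>C\<^esub> y) I = x I \<ominus>\<^bsub>Q I\<^esub> y I" using x y by simp
  moreover have "x I \<ominus>\<^bsub>Q I\<^esub> y I = \<zero>\<^bsub>Q I\<^esub> \<longleftrightarrow> x I = y I"
    using p.S.r_right_minus_eq x y completion_component[OF _ I] by simp
  ultimately show ?thesis using x y by (simp add: quotient_zero)
qed

lemma proj_kernel_mono:
  assumes I: "opn I" and J: "opn J" and IJ: "I \<subseteq> J" shows "proj_kernel I \<subseteq> proj_kernel J"
proof
  fix x assume x: "x \<in> proj_kernel I"
  then have "x J = J +> \<zero>"
    using completion_component_coarsen[OF _ I J IJ zero_closed] coset_zero[OF I] by simp
  then show "x \<in> proj_kernel J" using x coset_zero[OF J] by simp
qed

lemma completion_component_eq_coarsen: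
  assumes x: "x \<in> carrier C" and y: "y \<in> carrier C" and I: "opn I" and J: "opn J"
    and IJ: "I \<subseteq> J" and eq: "x I = y I"
  shows "x J = y J"
proof -
  obtain a where a: "a \<in> carrier R" "x I = I +> a"
    using x I by (rule completion_componentE)
  show ?thesis
    using completion_component_coarsen[OF x I J IJ a] completion_component_coarsen[OF y I J IJ a(1)]
      a(2) eq by simp
qed

lemma completion_fsE:
  assumes "K \<in> completion_fs R G" obtains I where "I \<in> G" "K = proj_kernel I"
  using assms unfolding completion_fs_def by blast

lemma completion_lin_top_ring: "lin_top_ring C (completion_fs R G)"
  unfolding lin_top_ring_def top_ring_def
proof (intro conjI ballI)
  have G: "G \<noteq> {}" "countable G" using top_ring unfolding top_ring_def by auto
  show "cring C" by (rule completion_cring)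
  show "completion_fs R G \<noteq> {}" using G(1) unfolding completion_fs_def by blast
  show "countable (completion_fs R G)" unfolding completion_fs_def using G(2) by (rule countable_image)
next
  fix K assume "K \<in> completion_fs R G"
  then obtain I where "I \<in> G" "K = proj_kernel I" by (rule completion_fsE)
  then show "ideal K C" using proj_kernel_ideal[OF fundamental_open] by simp
next
  fix K K' assume "K \<in> completion_fs R G" "K' \<in> completion_fs R G"
  then obtain I J where I: "I \<in> G" "K = proj_kernel I" and J: "J \<in> G" "K' = proj_kernel J"
    by (elim completion_fsE)
  obtain L where L: "L \<in> G" "L \<subseteq> I \<inter> J" using fundamental_directed[OF I(1) J(1)] .
  have "proj_kernel L \<subseteq> K" "proj_kernel L \<subseteq> K'"
    using L(2) I(2) J(2) proj_kernel_mono[OF fundamental_open[OF L(1)] fundamental_open[OF I(1)]]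
      proj_kernel_mono[OF fundamental_open[OF L(1)] fundamental_open[OF J(1)]] by auto
  moreover have "proj_kernel L \<in> completion_fs R G" using L(1) unfolding completion_fs_def by blast
  ultimately show "\<exists>K''\<in>completion_fs R G. K'' \<subseteq> K \<inter> K'" by blast
qed

lemma completion_open_idealE:
  assumes "open_ideal C (completion_fs R G) K"
  obtains I where "I \<in> G" "proj_kernel I \<subseteq> K"
  using assms unfolding open_ideal_def completion_fs_def by blast

lemma proj_kernel_open:
  assumes I: "opn I" shows "open_ideal C (completion_fs R G) (proj_kernel I)"
proof -
  obtain J where J: "J \<in> G" "J \<subseteq> I" using I by (rule open_ideal_fundamental)
  then have "proj_kernel J \<subseteq> proj_kernel I"
    using proj_kernel_mono[OF fundamental_open[OF J(1)] I] by blast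
  then show ?thesis
    using J(1) proj_kernel_ideal[OF I] unfolding open_ideal_def completion_fs_def by blast
qed

lemma completion_separated: "separated C (completion_fs R G)"
  unfolding separated_def
proof (intro ballI impI)
  fix x y assume x: "x \<in> carrier C" and y: "y \<in> carrier C"
    and xy: "\<forall>K\<in>completion_fs R G. x \<ominus>\<^bsub>C\<^esub> y \<in> K"
  show "x = y"
  proof (rule completion_eqI[OF x y])
    fix I assume I: "opn I"
    obtain J where J: "J \<in> G" "J \<subseteq> I" using I by (rule open_ideal_fundamental)
    have "proj_kernel J \<in> completion_fs R G" using J(1) unfolding completion_fs_def by blast
    then have "x \<ominus>\<^bsub>C\<^esub> y \<in> proj_kernel J" by (rule bspec[OF xy])
    then have "x J = y J"
      by (rule iffD1[OF completion_minus_mem_proj_kernel[OF x y fundamental_open[OF J(1)]]])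
    then show "x I = y I"
      using completion_component_eq_coarsen[OF x y fundamental_open[OF J(1)] I J(2)] by blast
  qed
qed

lemma compl_map_dense: "dense_in C (completion_fs R G) (compl_map R G ` carrier R)"
  unfolding dense_in_def
proof (intro conjI ballI)
  fix x K assume x: "x \<in> carrier C" and K: "K \<in> completion_fs R G"
  obtain J where J: "J \<in> G" "K = proj_kernel J" using K by (rule completion_fsE)
  obtain a where a: "a \<in> carrier R" "x J = J +> a"
    using x fundamental_open[OF J(1)] by (rule completion_componentE)
  have "compl_map R G a \<ominus>\<^bsub>C\<^esub> x \<in> K"
    using completion_minus_mem_proj_kernel[OF compl_map_closed[OF a(1)] x fundamental_open[OF J(1)]]
      J(2) a(2) compl_map_apply[OF fundamental_open[OF J(1)]] by simp
  then show "\<exists>s\<in>compl_map R G ` carrier R. s \<ominus>\<^bsub>C\<^esub> x \<in> K" using a(1) by blast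
qed (use compl_map_closed in blast)

lemma completion_continuous_eqI:
  assumes "f \<in> carrier C \<rightarrow> carrier C" "top_continuous C (completion_fs R G) C (completion_fs R G) f"
    and "g \<in> carrier C \<rightarrow> carrier C" "top_continuous C (completion_fs R G) C (completion_fs R G) g"
    and "\<And>b. b \<in> carrier R \<Longrightarrow> f (compl_map R G b) = g (compl_map R G b)"
    and "x \<in> carrier C"
  shows "f x = g x"
proof -
  interpret hat: lin_top_ring C "completion_fs R G" by (rule completion_lin_top_ring)
  show ?thesis
    by (rule hat.continuous_eq_on_dense[OF completion_separated compl_map_dense assms(1-4)])
      (use assms(5,6) in auto)
qed

section \<open>Extending continuous additive maps to the completion\<close>

lemma cont_additive_coset_cong:
  assumes d: "cont_additive R G d" and I: "opn I" and J: "opn J" and dJ: "d ` J \<subseteq> I"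
    and a: "a \<in> carrier R" and b: "b \<in> carrier R" and ab: "J +> a = J +> b"
  shows "I +> d a = I +> d b"
proof -
  interpret d: abelian_group_hom R R d using d by (rule cont_additive_abelian_group_hom)
  have "d (a \<ominus> b) \<in> I" using ab coset_eq_iff[OF J a b] dJ by blast
  then show ?thesis using coset_eq_iff[OF I] a b by (simp add: d.hom_a_minus)
qed

definition completion_ext :: "('a \<Rightarrow> 'a) \<Rightarrow> ('a set \<Rightarrow> 'a set) \<Rightarrow> 'a set \<Rightarrow> 'a set" where
  "completion_ext d x = (\<lambda>I. if opn I
     then I +> d (SOME b. b \<in> carrier R \<and> (\<exists>J. opn J \<and> d ` J \<subseteq> I \<and> x J = J +> b))
     else {})"

lemma completion_ext_apply:
  assumes d: "cont_additive R G d" and x: "x \<in> carrier C" and I: "opn I" and J: "opn J"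
    and dJ: "d ` J \<subseteq> I" and b: "b \<in> carrier R" "x J = J +> b"
  shows "completion_ext d x I = I +> d b"
proof -
  define P where "P b \<longleftrightarrow> b \<in> carrier R \<and> (\<exists>J. opn J \<and> d ` J \<subseteq> I \<and> x J = J +> b)" for b
  have "P b" unfolding P_def using J dJ b by blast
  then have "P (SOME b. P b)" by (rule someI)
  then obtain J0 where J0: "(SOME b. P b) \<in> carrier R" "opn J0" "d ` J0 \<subseteq> I"
    "x J0 = J0 +> (SOME b. P b)"
    unfolding P_def by (elim conjE exE) simp
  have K: "opn (J \<inter> J0)" using open_ideal_Int[OF J J0(2)] .
  obtain c where c: "c \<in> carrier R" "x (J \<inter> J0) = (J \<inter> J0) +> c"
    using x K by (rule completion_componentE)
  have "I +> d b = I +> d c"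
    using cont_additive_coset_cong[OF d I J dJ b(1) c(1)] b(2)
      completion_component_coarsen[OF x K J _ c] by simp
  moreover have "I +> d (SOME b. P b) = I +> d c"
    using cont_additive_coset_cong[OF d I J0(2,3,1) c(1)] J0(4)
      completion_component_coarsen[OF x K J0(2) _ c] by simp
  ultimately show ?thesis using I unfolding completion_ext_def P_def by simp
qed

lemma completion_ext_closed:
  assumes d: "cont_additive R G d" and x: "x \<in> carrier C"
  shows "completion_ext d x \<in> carrier C"
proof (rule completion_memI)
  fix J assume J: "opn J"
  obtain J' where J': "opn J'" "d ` J' \<subseteq> J" using cont_additive_modulus[OF d J] .
  obtain b where b: "b \<in> carrier R" "x J' = J' +> b"
    using x J'(1) by (rule completion_componentE)
  have "completion_ext d x I = I +> d b" if "opn I" "J \<subseteq> I" for I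
    using completion_ext_apply[OF d x that(1) J'(1) _ b] J'(2) that(2) by blast
  moreover have "d b \<in> carrier R" using cont_additive_closed[OF d b(1)] .
  ultimately show "\<exists>a\<in>carrier R. \<forall>I. opn I \<longrightarrow> J \<subseteq> I \<longrightarrow> completion_ext d x I = I +> a"
    by blast
qed (simp add: completion_ext_def)

lemma completion_ext_compl_map:
  assumes d: "cont_additive R G d" and b: "b \<in> carrier R"
  shows "completion_ext d (compl_map R G b) = compl_map R G (d b)"
proof (rule completion_eqI)
  show "completion_ext d (compl_map R G b) \<in> carrier C"
    by (rule completion_ext_closed[OF d compl_map_closed[OF b]])
  show "compl_map R G (d b) \<in> carrier C"
    by (rule compl_map_closed[OF cont_additive_closed[OF d b]])
next
  fix I assume I: "opn I"
  obtain J where J: "opn J" "d ` J \<subseteq> I" using cont_additive_modulus[OF d I] .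
  show "completion_ext d (compl_map R G b) I = compl_map R G (d b) I"
    using completion_ext_apply[OF d compl_map_closed[OF b] I J b] compl_map_apply[OF J(1)]
      compl_map_apply[OF I] by simp
qed

lemma completion_ext_add:
  assumes d: "cont_additive R G d" and x: "x \<in> carrier C" and y: "y \<in> carrier C"
  shows "completion_ext d (x \<oplus>\<^bsub>C\<^esub> y) = completion_ext d x \<oplus>\<^bsub>C\<^esub> completion_ext d y"
proof (rule completion_eqI)
  show "completion_ext d (x \<oplus>\<^bsub>C\<^esub> y) \<in> carrier C"
    using completion_ext_closed[OF d completion_closed(1)[OF x y]] .
  show "completion_ext d x \<oplus>\<^bsub>C\<^esub> completion_ext d y \<in> carrier C"
    using completion_closed(1)[OF completion_ext_closed[OF d x] completion_ext_closed[OF d y]] .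
next
  fix I assume I: "opn I"
  interpret d: abelian_group_hom R R d using d by (rule cont_additive_abelian_group_hom)
  interpret h: ring_hom_cring R "Q I" "(+>) I" using coset_ring_hom[OF I] .
  obtain J where J: "opn J" "d ` J \<subseteq> I" using cont_additive_modulus[OF d I] .
  obtain a where a: "a \<in> carrier R" "x J = J +> a"
    using x J(1) by (rule completion_componentE)
  obtain b where b: "b \<in> carrier R" "y J = J +> b"
    using y J(1) by (rule completion_componentE)
  have "completion_ext d (x \<oplus>\<^bsub>C\<^esub> y) I = I +> d (a \<oplus> b)"
    by (rule completion_ext_apply[OF d completion_closed(1)[OF x y] I J a_closed[OF a(1) b(1)]
          completion_component_add_mult(1)[where x = x and y = y, OF J(1) a b]])
  also have "\<dots> = (I +> d a) \<oplus>\<^bsub>Q I\<^esub> (I +> d b)"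
    using h.hom_add[OF d.hom_closed d.hom_closed] d.hom_add a(1) b(1) by simp
  also have "\<dots> = (completion_ext d x \<oplus>\<^bsub>C\<^esub> completion_ext d y) I"
    using completion_ext_apply[OF d x I J a] completion_ext_apply[OF d y I J b] I
    by (simp add: completion_apply)
  finally show "completion_ext d (x \<oplus>\<^bsub>C\<^esub> y) I = (completion_ext d x \<oplus>\<^bsub>C\<^esub> completion_ext d y) I" .
qed

lemma completion_ext_proj_kernel:
  assumes d: "cont_additive R G d" and I: "opn I" and J: "opn J" and dJ: "d ` J \<subseteq> I"
    and x: "x \<in> proj_kernel J"
  shows "completion_ext d x \<in> proj_kernel I"
proof -
  interpret d: abelian_group_hom R R d using d by (rule cont_additive_abelian_group_hom)
  have "completion_ext d x I = I +> d \<zero>"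
    using completion_ext_apply[OF d _ I J dJ zero_closed] x coset_zero[OF J] by simp
  then show ?thesis using completion_ext_closed[OF d] x coset_zero[OF I] by simp
qed

lemma completion_ext_cont_additive:
  assumes d: "cont_additive R G d"
  shows "cont_additive C (completion_fs R G) (completion_ext d)"
proof -
  interpret hat: lin_top_ring C "completion_fs R G" by (rule completion_lin_top_ring)
  show ?thesis
  proof (rule hat.cont_additiveI)
    show "completion_ext d \<in> hom (add_monoid C) (add_monoid C)"
      using completion_ext_closed[OF d] completion_ext_add[OF d] by (simp add: hom_def)
  next
    fix K assume "hat.opn K"
    then obtain I where I: "I \<in> G" "proj_kernel I \<subseteq> K" by (rule completion_open_idealE)
    obtain J where J: "opn J" "d ` J \<subseteq> I"
      using cont_additive_modulus[OF d fundamental_open[OF I(1)]] .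
    have "completion_ext d ` proj_kernel J \<subseteq> K"
      using completion_ext_proj_kernel[OF d fundamental_open[OF I(1)] J] I(2) by blast
    then show "\<exists>J. hat.opn J \<and> completion_ext d ` J \<subseteq> K"
      using proj_kernel_open[OF J(1)] by blast
  qed
qed

lemma completion_ext_unique:
  assumes d: "cont_additive R G d" and E: "E \<in> carrier C \<rightarrow> carrier C"
    and E_cont: "top_continuous C (completion_fs R G) C (completion_fs R G) E"
    and E_compl_map: "\<And>b. b \<in> carrier R \<Longrightarrow> E (compl_map R G b) = compl_map R G (d b)"
    and x: "x \<in> carrier C"
  shows "E x = completion_ext d x"
proof (rule completion_continuous_eqI[OF E E_cont _ _ _ x])
  show "completion_ext d \<in> carrier C \<rightarrow> carrier C"
    using completion_ext_closed[OF d] by blast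
  show "top_continuous C (completion_fs R G) C (completion_fs R G) (completion_ext d)"
    using completion_ext_cont_additive[OF d] unfolding cont_additive_def by blast
qed (simp add: E_compl_map completion_ext_compl_map[OF d])

lemma completion_ext_id:
  assumes d: "cont_additive R G d" and id: "\<And>b. b \<in> carrier R \<Longrightarrow> d b = b" and x: "x \<in> carrier C"
  shows "completion_ext d x = x"
proof -
  have "top_continuous C (completion_fs R G) C (completion_fs R G) (\<lambda>x. x)"
    unfolding top_continuous_def by blast
  then show ?thesis
    using completion_ext_unique[OF d _ _ _ x, of "\<lambda>x. x"] id by simp
qed

lemma completion_ext_compl_map_mult:
  assumes d: "cont_additive R G d" and s: "s \<in> carrier R"
    and linear: "\<And>b. b \<in> carrier R \<Longrightarrow> d (s \<otimes> b) = s \<otimes> d b" and x: "x \<in> carrier C"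
  shows "completion_ext d (compl_map R G s \<otimes>\<^bsub>C\<^esub> x) = compl_map R G s \<otimes>\<^bsub>C\<^esub> completion_ext d x"
proof (rule completion_eqI)
  have s': "compl_map R G s \<in> carrier C" using compl_map_closed[OF s] .
  show "completion_ext d (compl_map R G s \<otimes>\<^bsub>C\<^esub> x) \<in> carrier C"
    using completion_ext_closed[OF d completion_closed(2)[OF s' x]] .
  show "compl_map R G s \<otimes>\<^bsub>C\<^esub> completion_ext d x \<in> carrier C"
    using completion_closed(2)[OF s' completion_ext_closed[OF d x]] .
  fix I assume I: "opn I"
  interpret d: abelian_group_hom R R d using d by (rule cont_additive_abelian_group_hom)
  interpret h: ring_hom_cring R "Q I" "(+>) I" using coset_ring_hom[OF I] .
  obtain J where J: "opn J" "d ` J \<subseteq> I" using cont_additive_modulus[OF d I] .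
  obtain b where b: "b \<in> carrier R" "x J = J +> b"
    using x J(1) by (rule completion_componentE)
  have "completion_ext d (compl_map R G s \<otimes>\<^bsub>C\<^esub> x) I = I +> d (s \<otimes> b)"
    by (rule completion_ext_apply[OF d completion_closed(2)[OF s' x] I J m_closed[OF s b(1)]
          completion_component_add_mult(2)[where x = "compl_map R G s" and y = x,
            OF J(1) s compl_map_apply[OF J(1)] b]])
  also have "\<dots> = (I +> s) \<otimes>\<^bsub>Q I\<^esub> (I +> d b)"
    using linear[OF b(1)] h.hom_mult[OF s d.hom_closed[OF b(1)]] by simp
  also have "\<dots> = (compl_map R G s \<otimes>\<^bsub>C\<^esub> completion_ext d x) I"
    using completion_ext_apply[OF d x I J b] compl_map_apply[OF I] I by (simp add: completion_apply)
  finally show "completion_ext d (compl_map R G s \<otimes>\<^bsub>C\<^esub> x) I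
      = (compl_map R G s \<otimes>\<^bsub>C\<^esub> completion_ext d x) I" .
qed

lemma completion_ext_leibniz:
  fixes D :: "nat \<Rightarrow> 'a \<Rightarrow> 'a"
  assumes D: "\<And>k. cont_additive R G (D k)"
    and leibniz: "\<And>a b. a \<in> carrier R \<Longrightarrow> b \<in> carrier R \<Longrightarrow>
      D i (a \<otimes> b) = (\<Oplus>j\<in>{..i}. D j a \<otimes> D (i - j) b)"
    and x: "x \<in> carrier C" and y: "y \<in> carrier C"
  shows "completion_ext (D i) (x \<otimes>\<^bsub>C\<^esub> y)
    = (\<Oplus>\<^bsub>C\<^esub>j\<in>{..i}. completion_ext (D j) x \<otimes>\<^bsub>C\<^esub> completion_ext (D (i - j)) y)"
proof (rule completion_eqI)
  interpret hat: cring C by (rule completion_cring)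
  have terms: "(\<lambda>j. completion_ext (D j) x \<otimes>\<^bsub>C\<^esub> completion_ext (D (i - j)) y) \<in> {..i} \<rightarrow> carrier C"
    using completion_closed(2)[OF completion_ext_closed[OF D x] completion_ext_closed[OF D y]] by blast
  show "completion_ext (D i) (x \<otimes>\<^bsub>C\<^esub> y) \<in> carrier C"
    using completion_ext_closed[OF D completion_closed(2)[OF x y]] .
  show "(\<Oplus>\<^bsub>C\<^esub>j\<in>{..i}. completion_ext (D j) x \<otimes>\<^bsub>C\<^esub> completion_ext (D (i - j)) y) \<in> carrier C"
    using hat.finsum_closed[OF terms] .
  fix I assume I: "opn I"
  interpret h: ring_hom_cring R "Q I" "(+>) I" using coset_ring_hom[OF I] .
  interpret p: ring_hom_cring C "Q I" "\<lambda>x. x I" using completion_proj_ring_hom[OF I] .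
  note D_closed = cont_additive_closed[OF D]
  obtain J where J: "opn J" "\<forall>k\<le>i. D k ` J \<subseteq> I"
    using cont_additive_common_modulus[where D = D and n = i, OF D I] by blast
  obtain a where a: "a \<in> carrier R" "x J = J +> a"
    using x J(1) by (rule completion_componentE)
  obtain b where b: "b \<in> carrier R" "y J = J +> b"
    using y J(1) by (rule completion_componentE)
  have ext_x: "completion_ext (D j) x I = I +> D j a" and ext_y: "completion_ext (D (i - j)) y I = I +> D (i - j) b"
    if "j \<in> {..i}" for j
    using completion_ext_apply[OF D x I J(1) _ a] completion_ext_apply[OF D y I J(1) _ b] J(2) that
    by auto
  have "completion_ext (D i) (x \<otimes>\<^bsub>C\<^esub> y) I = I +> D i (a \<otimes> b)"
    using completion_ext_apply[OF D completion_closed(2)[OF x y] I J(1) _ m_closed[OF a(1) b(1)]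
        completion_component_add_mult(2)[where x = x and y = y, OF J(1) a b]] J(2) by blast
  also have "\<dots> = (\<Oplus>\<^bsub>Q I\<^esub>j\<in>{..i}. I +> (D j a \<otimes> D (i - j) b))"
    using leibniz[OF a(1) b(1)] h.hom_finsum[of "\<lambda>j. D j a \<otimes> D (i - j) b"] a(1) b(1) D_closed
    by (simp add: Pi_iff comp_def)
  also have "\<dots> = (\<Oplus>\<^bsub>Q I\<^esub>j\<in>{..i}. (completion_ext (D j) x \<otimes>\<^bsub>C\<^esub> completion_ext (D (i - j)) y) I)"
    using ext_x ext_y I a(1) b(1) D_closed
    by (intro h.S.finsum_cong') (auto simp: completion_apply Pi_iff)
  also have "\<dots> = (\<Oplus>\<^bsub>C\<^esub>j\<in>{..i}. completion_ext (D j) x \<otimes>\<^bsub>C\<^esub> completion_ext (D (i - j)) y) I"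
    using p.hom_finsum[OF terms] by (simp add: comp_def)
  finally show "completion_ext (D i) (x \<otimes>\<^bsub>C\<^esub> y) I
      = (\<Oplus>\<^bsub>C\<^esub>j\<in>{..i}. completion_ext (D j) x \<otimes>\<^bsub>C\<^esub> completion_ext (D (i - j)) y) I" .
qed

lemma completion_ext_comp_add_pow:
  fixes n :: nat
  assumes d: "cont_additive R G d" and e: "cont_additive R G e" and f: "cont_additive R G f"
    and comp: "\<And>a. a \<in> carrier R \<Longrightarrow> d (e a) = add_pow R n (f a)"
    and x: "x \<in> carrier C"
  shows "completion_ext d (completion_ext e x) = add_pow C n (completion_ext f x)"
proof (rule completion_eqI)
  interpret hat: cring C by (rule completion_cring)
  have ex: "completion_ext e x \<in> carrier C" and fx: "completion_ext f x \<in> carrier C"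
    using completion_ext_closed[OF e x] completion_ext_closed[OF f x] .
  show "completion_ext d (completion_ext e x) \<in> carrier C" using completion_ext_closed[OF d ex] .
  show "add_pow C n (completion_ext f x) \<in> carrier C" using fx by simp
  fix I assume I: "opn I"
  interpret h: ring_hom_cring R "Q I" "(+>) I" using coset_ring_hom[OF I] .
  interpret p: ring_hom_cring C "Q I" "\<lambda>x. x I" using completion_proj_ring_hom[OF I] .
  note e_closed = cont_additive_closed[OF e] and f_closed = cont_additive_closed[OF f]
  obtain J1 where J1: "opn J1" "d ` J1 \<subseteq> I" using cont_additive_modulus[OF d I] .
  obtain J2 where J2: "opn J2" "e ` J2 \<subseteq> J1" using cont_additive_modulus[OF e J1(1)] .
  obtain J3 where J3: "opn J3" "f ` J3 \<subseteq> I" using cont_additive_modulus[OF f I] .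
  have J: "opn (J2 \<inter> J3)" using open_ideal_Int[OF J2(1) J3(1)] .
  obtain b where b: "b \<in> carrier R" "x (J2 \<inter> J3) = (J2 \<inter> J3) +> b"
    using x J by (rule completion_componentE)
  have "completion_ext e x J1 = J1 +> e b"
    using completion_ext_apply[OF e x J1(1) J _ b] J2(2) by blast
  then have "completion_ext d (completion_ext e x) I = I +> d (e b)"
    using completion_ext_apply[OF d ex I J1 e_closed[OF b(1)]] by blast
  also have "\<dots> = add_pow (Q I) n (I +> f b)"
    using comp[OF b(1)] h.ring.hom_add_pow[OF f_closed[OF b(1)]] by simp
  also have "\<dots> = add_pow (Q I) n (completion_ext f x I)"
    using completion_ext_apply[OF f x I J _ b] J3(2) by (metis Int_lower2 image_mono order_trans)
  also have "\<dots> = add_pow C n (completion_ext f x) I"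
    using p.ring.hom_add_pow[OF fx] by simp
  finally show "completion_ext d (completion_ext e x) I = add_pow C n (completion_ext f x) I" .
qed

lemma top_integrable_eventually_modulus:
  assumes "top_integrable R G D" and I: "opn I"
  obtains J n0 where "opn J" "\<And>n. n \<ge> n0 \<Longrightarrow> D n ` J \<subseteq> I"
proof -
  obtain J n0 where J: "opn J" "\<forall>n\<ge>n0. \<forall>y\<in>carrier R. y \<ominus> \<zero> \<in> J \<longrightarrow> D n y \<in> I"
    using assms unfolding top_integrable_def by blast
  have "D n ` J \<subseteq> I" if "n \<ge> n0" for n
    using J(2) that open_ideal_subset[OF J(1)] by (force simp: a_minus_def)
  with J(1) show ?thesis using that by blast
qed

lemma completion_ext_top_integrable:
  fixes D :: "nat \<Rightarrow> 'a \<Rightarrow> 'a"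
  assumes D: "\<And>n. cont_additive R G (D n)" and int: "top_integrable R G D"
  shows "top_integrable C (completion_fs R G) (\<lambda>n. completion_ext (D n))"
  unfolding top_integrable_def
proof (intro ballI allI impI)
  fix x K assume x: "x \<in> carrier C" and K: "open_ideal C (completion_fs R G) K"
  obtain I where I: "I \<in> G" "proj_kernel I \<subseteq> K" using K by (rule completion_open_idealE)
  have Io: "opn I" using fundamental_open[OF I(1)] .
  obtain J n0 where J: "opn J" "\<And>n. n \<ge> n0 \<Longrightarrow> D n ` J \<subseteq> I"
    using top_integrable_eventually_modulus[OF int Io] by blast
  obtain b where b: "b \<in> carrier R" "x J = J +> b"
    using x J(1) by (rule completion_componentE)
  obtain Jb nb where Jb: "opn Jb" "\<forall>n\<ge>nb. \<forall>y\<in>carrier R. y \<ominus> b \<in> Jb \<longrightarrow> D n y \<in> I"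
    using int b(1) Io unfolding top_integrable_def by blast
  have "b \<ominus> b \<in> Jb"
    using b(1) additive_subgroup.zero_closed[OF ideal.axioms(1)[OF open_ideal_ideal[OF Jb(1)]]]
    by (simp add: r_neg a_minus_def)
  then have Db: "D n b \<in> I" if "n \<ge> nb" for n using Jb(2) b(1) that by blast
  have "completion_ext (D n) y \<in> K"
    if n: "n \<ge> max n0 nb" and y: "y \<in> carrier C" and yx: "y \<ominus>\<^bsub>C\<^esub> x \<in> proj_kernel J" for n y
  proof -
    have "D n ` J \<subseteq> I" using J(2) n by simp
    moreover have "y J = J +> b"
      using completion_minus_mem_proj_kernel[OF y x J(1)] yx b(2) by simp
    ultimately have "completion_ext (D n) y I = I +> D n b"
      using completion_ext_apply[OF D y Io J(1) _ b(1)] by blast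
    then show ?thesis using Db n coset_of_mem[OF Io] completion_ext_closed[OF D y] I(2) by auto
  qed
  then show "\<exists>K' n0. open_ideal C (completion_fs R G) K' \<and>
      (\<forall>n\<ge>n0. \<forall>y\<in>carrier C. y \<ominus>\<^bsub>C\<^esub> x \<in> K' \<longrightarrow> completion_ext (D n) y \<in> K)"
    using proj_kernel_open[OF J(1)] by blast
qed

section \<open>Continuous iterated higher derivations\<close>

lemma cont_iter_higher_deriv_cont_additive:
  "cont_iter_higher_deriv A R G phi D \<Longrightarrow> cont_additive R G (D i)"
  unfolding cont_iter_higher_deriv_def cont_additive_def hom_def by simp

lemma cont_iter_higher_deriv_completion_ext:
  assumes phi: "phi \<in> carrier A \<rightarrow> carrier R" and D: "cont_iter_higher_deriv A R G phi D"
  shows "cont_iter_higher_deriv A C (completion_fs R G) (compl_map R G \<circ> phi)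
           (\<lambda>i. completion_ext (D i))"
proof -
  note D_cont = cont_iter_higher_deriv_cont_additive[OF D]
  have D_0: "\<And>b. b \<in> carrier R \<Longrightarrow> D 0 b = b"
    and D_linear: "\<And>i a b. a \<in> carrier A \<Longrightarrow> b \<in> carrier R \<Longrightarrow> D i (phi a \<otimes> b) = phi a \<otimes> D i b"
    and D_leibniz: "\<And>i a b. a \<in> carrier R \<Longrightarrow> b \<in> carrier R \<Longrightarrow>
      D i (a \<otimes> b) = (\<Oplus>j\<in>{..i}. D j a \<otimes> D (i - j) b)"
    and D_iterate: "\<And>i j b. b \<in> carrier R \<Longrightarrow> D i (D j b) = add_pow R ((i + j) choose i) (D (i + j) b)"
    using D unfolding cont_iter_higher_deriv_def by blast+
  have "completion_ext (D i) \<in> hom (add_monoid C) (add_monoid C) \<and>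
      top_continuous C (completion_fs R G) C (completion_fs R G) (completion_ext (D i))" for i
    using completion_ext_cont_additive[OF D_cont] unfolding cont_additive_def .
  moreover have "completion_ext (D 0) x = x" if "x \<in> carrier C" for x
    by (rule completion_ext_id[OF D_cont D_0 that])
  moreover have "completion_ext (D i) ((compl_map R G \<circ> phi) a \<otimes>\<^bsub>C\<^esub> x)
      = (compl_map R G \<circ> phi) a \<otimes>\<^bsub>C\<^esub> completion_ext (D i) x"
    if "a \<in> carrier A" "x \<in> carrier C" for i a x
    using completion_ext_compl_map_mult[OF D_cont _ D_linear[OF that(1)] that(2)] phi that(1) by auto
  moreover have "completion_ext (D i) (x \<otimes>\<^bsub>C\<^esub> y)
      = (\<Oplus>\<^bsub>C\<^esub>j\<in>{..i}. completion_ext (D j) x \<otimes>\<^bsub>C\<^esub> completion_ext (D (i - j)) y)"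
    if "x \<in> carrier C" "y \<in> carrier C" for i x y
    by (rule completion_ext_leibniz[OF D_cont D_leibniz that])
  moreover have "completion_ext (D i) (completion_ext (D j) x)
      = add_pow C ((i + j) choose i) (completion_ext (D (i + j)) x)"
    if "x \<in> carrier C" for i j x
    by (rule completion_ext_comp_add_pow[OF D_cont D_cont D_cont D_iterate that])
  ultimately show ?thesis
    unfolding cont_iter_higher_deriv_def hom_def by simp
qed

end

theorem lemma2p24:
  fixes A :: "('a, 'm) ring_scheme" and B :: "('b, 'n) ring_scheme"
    and FA :: "'a set set" and FB :: "'b set set" and phi :: "'a \<Rightarrow> 'b"
    and D :: "nat \<Rightarrow> 'b \<Rightarrow> 'b"
  assumes "top_algebra A FA B FB phi"
    and "cont_iter_higher_deriv A B FB phi D"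
  shows "\<exists>Dh. cont_iter_higher_deriv A (completion B FB) (completion_fs B FB)
                 (compl_map B FB \<circ> phi) Dh
           \<and> (\<forall>i. \<forall>b\<in>carrier B. Dh i (compl_map B FB b) = compl_map B FB (D i b))
           \<and> (\<forall>Dh'. cont_iter_higher_deriv A (completion B FB) (completion_fs B FB)
                      (compl_map B FB \<circ> phi) Dh'
                    \<and> (\<forall>i. \<forall>b\<in>carrier B. Dh' i (compl_map B FB b) = compl_map B FB (D i b))
                    \<longrightarrow> (\<forall>i. \<forall>x\<in>carrier (completion B FB). Dh' i x = Dh i x))
           \<and> (top_integrable B FB D \<longrightarrow> top_integrable (completion B FB) (completion_fs B FB) Dh)"
proof -
  interpret lin_top_ring B FB
    using assms(1) unfolding top_algebra_def lin_top_ring_def by blast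
  have phi: "phi \<in> carrier A \<rightarrow> carrier B"
    using assms(1) unfolding top_algebra_def ring_hom_def by blast
  note D_cont = cont_iter_higher_deriv_cont_additive[OF assms(2)]
  let ?Dh = "\<lambda>i. completion_ext (D i)"
  show ?thesis
  proof (intro exI[of _ ?Dh] conjI allI impI ballI)
    show "cont_iter_higher_deriv A C (completion_fs B FB) (compl_map B FB \<circ> phi) ?Dh"
      by (rule cont_iter_higher_deriv_completion_ext[OF phi assms(2)])
  next
    fix i b assume "b \<in> carrier B"
    then show "?Dh i (compl_map B FB b) = compl_map B FB (D i b)"
      by (rule completion_ext_compl_map[OF D_cont])
  next
    fix Dh' i x
    assume "cont_iter_higher_deriv A C (completion_fs B FB) (compl_map B FB \<circ> phi) Dh'
        \<and> (\<forall>i. \<forall>b\<in>carrier B. Dh' i (compl_map B FB b) = compl_map B FB (D i b))"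
      and "x \<in> carrier C"
    then show "Dh' i x = ?Dh i x"
      by (intro completion_ext_unique[OF D_cont]) (auto simp: cont_iter_higher_deriv_def)
  next
    assume "top_integrable B FB D"
    then show "top_integrable C (completion_fs B FB) ?Dh"
      by (rule completion_ext_top_integrable[OF D_cont])
  qed
qed

end
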